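(* There exist $\varepsilon_0>0$ and a function $\delta:(0,\varepsilon_0)\to(0,\infty)$ with $\delta(\varepsilon)\to0$ as $\varepsilon\to0$ such that the following holds. Let $(\varphi_i)_{i\in\mathbb{N}}\subset[0,\infty)$ with $\sum_i\varphi_i=\Phi>0$ and $\varphi_0\ge\varphi_i$ for all $i\in\mathbb{N}$, and suppose that for some $\varepsilon\in(0,\varepsilon_0)$, $$\sum_i\varphi_i^{1/2}-\Phi^{1/2}\le\varepsilon\Phi^{1/2}.$$ Then $\Phi-\varphi_0\le\delta(\varepsilon)\Phi$. *)

theory Defs
  imports Complex_Main
begin

end

theory Submission
  imports Defs
begin

(* Since every \<phi> i is at most \<phi> 0, one has \<phi> i \<le> sqrt (\<phi> 0) * sqrt (\<phi> i); summing gives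
   \<Phi> \<le> sqrt (\<phi> 0) * (\<Sum>i. sqrt (\<phi> i)) \<le> sqrt (\<phi> 0) * (1 + \<epsilon>) * sqrt \<Phi>, hence
   \<Phi> \<le> (1 + \<epsilon>)^2 * \<phi> 0, i.e. one may take \<delta> \<epsilon> = 1 - 1 / (1 + \<epsilon>)^2. *)

lemma sums_le_sqrt_bound_mult_suminf_sqrt:
  fixes \<phi> :: "nat \<Rightarrow> real"
  assumes "\<phi> sums \<Phi>" and "\<And>i. 0 \<le> \<phi> i" and "\<And>i. \<phi> i \<le> M"
    and "summable (\<lambda>i. sqrt (\<phi> i))"
  shows "\<Phi> \<le> sqrt M * (\<Sum>i. sqrt (\<phi> i))"
proof -
  have "\<phi> i = sqrt (\<phi> i) * sqrt (\<phi> i)" for i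
    using assms(2) by simp
  also have "\<dots> i \<le> sqrt M * sqrt (\<phi> i)" for i
    using assms(2,3) by (intro mult_right_mono) auto
  finally have "\<phi> i \<le> sqrt M * sqrt (\<phi> i)" for i .
  moreover have "(\<lambda>i. sqrt M * sqrt (\<phi> i)) sums (sqrt M * (\<Sum>i. sqrt (\<phi> i)))"
    using assms(4) by (intro sums_mult summable_sums)
  ultimately show ?thesis
    by (rule sums_le[OF _ assms(1)])
qed

lemma sums_le_square_mult_bound:
  fixes \<phi> :: "nat \<Rightarrow> real"
  assumes "\<phi> sums \<Phi>" and "\<And>i. 0 \<le> \<phi> i" and "\<And>i. \<phi> i \<le> M"
    and "summable (\<lambda>i. sqrt (\<phi> i))"
    and "(\<Sum>i. sqrt (\<phi> i)) \<le> c * sqrt \<Phi>" and "0 \<le> c"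
  shows "\<Phi> \<le> c\<^sup>2 * M"
proof -
  have "0 \<le> M"
    using assms(2,3) order_trans by blast
  show ?thesis
  proof (cases "\<Phi> = 0")
    case True
    with \<open>0 \<le> M\<close> show ?thesis
      by simp
  next
    case False
    have "0 \<le> \<Phi>"
      by (rule sums_le[OF _ sums_zero assms(1)]) (rule assms(2))
    with False have "0 < sqrt \<Phi>"
      by simp
    have "sqrt \<Phi> * sqrt \<Phi> = \<Phi>"
      using \<open>0 \<le> \<Phi>\<close> by simp
    also have "\<dots> \<le> sqrt M * (\<Sum>i. sqrt (\<phi> i))"
      by (rule sums_le_sqrt_bound_mult_suminf_sqrt[OF assms(1-4)])
    also have "\<dots> \<le> sqrt M * (c * sqrt \<Phi>)"
      using assms(5) \<open>0 \<le> M\<close> by (intro mult_left_mono) auto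
    finally have "sqrt \<Phi> * sqrt \<Phi> \<le> (c * sqrt M) * sqrt \<Phi>"
      by (simp only: mult_ac)
    then have "sqrt \<Phi> \<le> c * sqrt M"
      using \<open>0 < sqrt \<Phi>\<close> by (rule mult_right_le_imp_le)
    then have "(sqrt \<Phi>)\<^sup>2 \<le> (c * sqrt M)\<^sup>2"
      using \<open>0 < sqrt \<Phi>\<close> by (intro power_mono) auto
    then show ?thesis
      using \<open>0 \<le> \<Phi>\<close> \<open>0 \<le> M\<close> assms(6) by (simp add: power_mult_distrib)
  qed
qed

theorem proposition2p3:
  shows "\<exists>\<epsilon>0::real. \<epsilon>0 > 0 \<and> (\<exists>\<delta>::real \<Rightarrow> real.
     (\<forall>\<epsilon>\<in>{0<..<\<epsilon>0}. \<delta> \<epsilon> > 0) \<and>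
     (\<delta> \<longlongrightarrow> 0) (at_right 0) \<and>
     (\<forall>(\<phi>::nat \<Rightarrow> real) (\<Phi>::real) (\<epsilon>::real).
        (\<forall>i. \<phi> i \<ge> 0) \<longrightarrow> \<phi> sums \<Phi> \<longrightarrow> \<Phi> > 0 \<longrightarrow>
        (\<forall>i. \<phi> 0 \<ge> \<phi> i) \<longrightarrow> \<epsilon> \<in> {0<..<\<epsilon>0} \<longrightarrow>
        summable (\<lambda>i. sqrt (\<phi> i)) \<longrightarrow>
        (\<Sum>i. sqrt (\<phi> i)) - sqrt \<Phi> \<le> \<epsilon> * sqrt \<Phi> \<longrightarrow>
        \<Phi> - \<phi> 0 \<le> \<delta> \<epsilon> * \<Phi>))"
proof (intro exI[of _ 1] conjI exI[of _ "\<lambda>\<epsilon>. 1 - 1 / (1 + \<epsilon>)\<^sup>2"] ballI allI impI)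
  show "(0::real) < 1"
    by simp
next
  fix \<epsilon> :: real
  assume "\<epsilon> \<in> {0<..<1}"
  then have "1 < (1 + \<epsilon>)\<^sup>2"
    by (intro one_less_power) auto
  then show "1 - 1 / (1 + \<epsilon>)\<^sup>2 > 0"
    by (simp add: divide_less_eq)
next
  have "((\<lambda>\<epsilon>::real. 1 - 1 / (1 + \<epsilon>)\<^sup>2) \<longlongrightarrow> 1 - 1 / (1 + 0)\<^sup>2) (at_right 0)"
    by (intro tendsto_intros) auto
  then show "((\<lambda>\<epsilon>::real. 1 - 1 / (1 + \<epsilon>)\<^sup>2) \<longlongrightarrow> 0) (at_right 0)"
    by simp
next
  fix \<phi> :: "nat \<Rightarrow> real" and \<Phi> \<epsilon> :: real
  assume "\<forall>i. \<phi> i \<ge> 0" "\<phi> sums \<Phi>" "\<Phi> > 0" "\<forall>i. \<phi> 0 \<ge> \<phi> i" "\<epsilon> \<in> {0<..<1}"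
    "summable (\<lambda>i. sqrt (\<phi> i))" "(\<Sum>i. sqrt (\<phi> i)) - sqrt \<Phi> \<le> \<epsilon> * sqrt \<Phi>"
  then have "\<Phi> \<le> (1 + \<epsilon>)\<^sup>2 * \<phi> 0"
    by (intro sums_le_square_mult_bound) (auto simp: algebra_simps)
  with \<open>\<epsilon> \<in> {0<..<1}\<close> show "\<Phi> - \<phi> 0 \<le> (1 - 1 / (1 + \<epsilon>)\<^sup>2) * \<Phi>"
    by (simp add: field_simps)
qed

end
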